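(* Let $R$ be a GWNC ring. Then the Jacobson radical $J(R)$ is nil.
   Context: All rings are associative with identity. For a ring $S$, $U(S)$, ${\rm Nil}(S)$, ${\rm Id}(S)$ denote units, nilpotents, idempotents. $S$ is GWNC if every $a\in S\setminus U(S)$ can be written as $a=q+e$ or $a=q-e$ with $q\in{\rm Nil}(S)$, $e\in{\rm Id}(S)$. *)

theory Defs
  imports Main
begin

definition units_of_ring :: "'a::ring_1 set" where
  "units_of_ring = {a. \<exists>b. a * b = 1 \<and> b * a = 1}"

definition nilpotents :: "'a::ring_1 set" where
  "nilpotents = {a. \<exists>n::nat. a ^ n = 0}"

definition idempotents :: "'a::ring_1 set" where
  "idempotents = {e. e * e = e}"

definition GWNC :: "'a::ring_1 itself \<Rightarrow> bool" where
  "GWNC _ \<longleftrightarrow> (\<forall>a::'a. a \<notin> units_of_ring \<longrightarrow>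
      (\<exists>q \<in> nilpotents. \<exists>e \<in> idempotents. a = q + e \<or> a = q - e))"

definition left_ideal :: "'a::ring_1 set \<Rightarrow> bool" where
  "left_ideal I \<longleftrightarrow> 0 \<in> I \<and> (\<forall>x\<in>I. \<forall>y\<in>I. x + y \<in> I) \<and> (\<forall>x\<in>I. - x \<in> I)
     \<and> (\<forall>r x. x \<in> I \<longrightarrow> r * x \<in> I)"

definition maximal_left_ideal :: "'a::ring_1 set \<Rightarrow> bool" where
  "maximal_left_ideal M \<longleftrightarrow> left_ideal M \<and> M \<noteq> UNIV \<and>
     (\<forall>I. left_ideal I \<and> M \<subseteq> I \<longrightarrow> I = M \<or> I = UNIV)"

definition jacobson :: "'a::ring_1 set" where
  "jacobson = \<Inter> {M. maximal_left_ideal M}"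

definition nil_set :: "'a::ring_1 set \<Rightarrow> bool" where
  "nil_set S \<longleftrightarrow> S \<subseteq> nilpotents"

end

theory Submission
  imports Defs
begin

text \<open>The Jacobson radical is a two-sided ideal and \<open>1 - x\<close> is left invertible for every
  \<open>x \<in> jacobson\<close>, so the only idempotent in it is \<open>0\<close>. If \<open>a \<in> jacobson\<close> is not a unit, write
  \<open>a = q + e\<close> or \<open>a = q - e\<close>. Modulo the radical \<open>q\<close> and \<open>\<plusminus>e\<close> agree, hence so do their
  \<open>N\<close>-th powers \<open>0\<close> and \<open>\<plusminus>e\<close>: the idempotent \<open>e\<close> lies in the radical, so \<open>e = 0\<close> and
  \<open>a = q\<close> is nilpotent. A unit in the radical forces the zero ring.\<close>

lemma
  fixes I :: "'a::ring_1 set"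
  assumes "left_ideal I"
  shows left_ideal_0: "0 \<in> I"
    and left_ideal_add: "x \<in> I \<Longrightarrow> y \<in> I \<Longrightarrow> x + y \<in> I"
    and left_ideal_mult: "x \<in> I \<Longrightarrow> r * x \<in> I"
    and left_ideal_uminus: "x \<in> I \<Longrightarrow> - x \<in> I"
    and left_ideal_one_imp_UNIV: "1 \<in> I \<Longrightarrow> I = UNIV"
  using assms unfolding left_ideal_def by (auto, metis mult.right_neutral)

lemma left_ideal_singleton_0: "left_ideal ({0}::'a::ring_1 set)"
  unfolding left_ideal_def by simp

lemma left_ideal_add_mult:
  fixes M :: "'a::ring_1 set"
  assumes M: "left_ideal M"
  shows "left_ideal {m + r * y | m r. m \<in> M}" (is "left_ideal ?I")
proof -
  have mem: "m + r * y \<in> ?I" if "m \<in> M" for m r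
    using that by blast
  show ?thesis
    unfolding left_ideal_def
  proof (intro conjI ballI allI impI)
    show "0 \<in> ?I"
      using mem[OF left_ideal_0[OF M], of 0] by simp
  next
    fix a b assume "a \<in> ?I" "b \<in> ?I"
    then obtain m r m' r' where "m \<in> M" "m' \<in> M" "a = m + r * y" "b = m' + r' * y"
      by blast
    moreover have "(m + r * y) + (m' + r' * y) = (m + m') + (r + r') * y"
      by (simp add: algebra_simps)
    ultimately show "a + b \<in> ?I"
      using mem[OF left_ideal_add[OF M], of m m' "r + r'"] by (simp only:)
  next
    fix a assume "a \<in> ?I"
    then obtain m r where "m \<in> M" "a = m + r * y"
      by blast
    moreover have "- (m + r * y) = - m + (- r) * y"
      by simp
    ultimately show "- a \<in> ?I"
      using mem[OF left_ideal_uminus[OF M], of m "- r"] by (simp only:)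
  next
    fix s a assume "a \<in> ?I"
    then obtain m r where "m \<in> M" "a = m + r * y"
      by blast
    moreover have "s * (m + r * y) = s * m + (s * r) * y"
      by (simp add: algebra_simps)
    ultimately show "s * a \<in> ?I"
      using mem[OF left_ideal_mult[OF M], of m s "s * r"] by (simp only:)
  qed
qed

lemma left_ideal_Union_chain:
  fixes C :: "'a::ring_1 set set"
  assumes "C \<noteq> {}" and ideals: "\<And>I. I \<in> C \<Longrightarrow> left_ideal I"
    and chain: "\<And>I J. I \<in> C \<Longrightarrow> J \<in> C \<Longrightarrow> I \<subseteq> J \<or> J \<subseteq> I"
  shows "left_ideal (\<Union>C)"
proof -
  have "x + y \<in> \<Union>C" if xy: "x \<in> \<Union>C" "y \<in> \<Union>C" for x y
  proof -
    obtain I J where "I \<in> C" "J \<in> C" "x \<in> I" "y \<in> J"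
      using xy by blast
    with ideals[of I] ideals[of J] chain[of I J] show ?thesis
      using left_ideal_add by blast
  qed
  then show ?thesis
    using assms(1) ideals unfolding left_ideal_def by blast
qed

lemma left_ideal_Inter: "(\<And>I. I \<in> S \<Longrightarrow> left_ideal I) \<Longrightarrow> left_ideal (\<Inter>S :: 'a::ring_1 set)"
  unfolding left_ideal_def by blast

lemma
  fixes M :: "'a::ring_1 set"
  assumes "maximal_left_ideal M"
  shows maximal_left_ideal_left_ideal: "left_ideal M"
    and maximal_left_ideal_one_notin: "1 \<notin> M"
  using assms left_ideal_one_imp_UNIV unfolding maximal_left_ideal_def by auto

lemma exists_maximal_left_ideal:
  fixes L :: "'a::ring_1 set"
  assumes L: "left_ideal L" "1 \<notin> L"
  shows "\<exists>M. maximal_left_ideal M \<and> L \<subseteq> M"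
proof -
  define S where "S = {I::'a set. left_ideal I \<and> L \<subseteq> I \<and> 1 \<notin> I}"
  have "\<exists>U\<in>S. \<forall>X\<in>C. X \<subseteq> U" if C: "C \<in> chains S" for C
  proof (cases "C = {}")
    case True
    then show ?thesis using L unfolding S_def by auto
  next
    case False
    have CS: "C \<subseteq> S" and "\<And>I J. I \<in> C \<Longrightarrow> J \<in> C \<Longrightarrow> I \<subseteq> J \<or> J \<subseteq> I"
      using C unfolding chains_def chain_subset_def by auto
    then have "left_ideal (\<Union>C)"
      using False by (intro left_ideal_Union_chain) (auto simp: S_def)
    moreover have "L \<subseteq> \<Union>C" "1 \<notin> \<Union>C"
      using False CS by (auto simp: S_def)
    ultimately have "\<Union>C \<in> S"
      by (simp add: S_def)
    then show ?thesis by blast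
  qed
  then have "\<forall>C\<in>chains S. \<exists>U\<in>S. \<forall>X\<in>C. X \<subseteq> U"
    by blast
  from Zorn_Lemma2[OF this] obtain M where M: "M \<in> S" "\<And>X. X \<in> S \<Longrightarrow> M \<subseteq> X \<Longrightarrow> X = M"
    by blast
  have "maximal_left_ideal M"
    unfolding maximal_left_ideal_def
  proof (intro conjI allI impI)
    show "left_ideal M" "M \<noteq> UNIV"
      using M(1) unfolding S_def by auto
    fix I assume I: "left_ideal I \<and> M \<subseteq> I"
    show "I = M \<or> I = UNIV"
    proof (cases "1 \<in> I")
      case True
      then show ?thesis using left_ideal_one_imp_UNIV I by blast
    next
      case False
      then have "I \<in> S"
        using I M(1) unfolding S_def by auto
      then show ?thesis
        using I M(2) by blast
    qed
  qed
  then show ?thesis using M(1) unfolding S_def by auto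
qed

lemma maximal_left_ideal_add_mult_eq_one:
  fixes M :: "'a::ring_1 set"
  assumes M: "maximal_left_ideal M" and y: "y \<notin> M"
  shows "\<exists>m\<in>M. \<exists>r. 1 = m + r * y"
proof -
  define I where "I = {m + r * y | m r. m \<in> M}"
  have LM: "left_ideal M"
    using M by (rule maximal_left_ideal_left_ideal)
  have "m + 0 * y \<in> I" if "m \<in> M" for m
    unfolding I_def using that by blast
  then have "M \<subseteq> I"
    by auto
  moreover have "left_ideal I"
    unfolding I_def using LM by (rule left_ideal_add_mult)
  ultimately have "I = M \<or> I = UNIV"
    using M unfolding maximal_left_ideal_def by blast
  moreover have "0 + 1 * y \<in> I"
    unfolding I_def using left_ideal_0[OF LM] by blast
  ultimately have "I = UNIV"
    using y by auto
  then show ?thesis unfolding I_def by blast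
qed

lemma jacobsonI: "(\<And>M. maximal_left_ideal M \<Longrightarrow> (x::'a::ring_1) \<in> M) \<Longrightarrow> x \<in> jacobson"
  unfolding jacobson_def by blast

lemma jacobsonD: "x \<in> (jacobson::'a::ring_1 set) \<Longrightarrow> maximal_left_ideal M \<Longrightarrow> x \<in> M"
  unfolding jacobson_def by blast

lemma left_ideal_jacobson: "left_ideal (jacobson :: 'a::ring_1 set)"
  unfolding jacobson_def by (rule left_ideal_Inter) (simp add: maximal_left_ideal_left_ideal)

lemma jacobson_one_minus_left_invertible:
  fixes x :: "'a::ring_1"
  assumes x: "x \<in> jacobson"
  shows "\<exists>u. u * (1 - x) = 1"
proof (rule ccontr)
  define L where "L = {m + r * (1 - x) | m r. m \<in> {0}}"
  assume "\<nexists>u. u * (1 - x) = 1"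
  then have "1 \<notin> L"
    unfolding L_def by auto
  then obtain M where M: "maximal_left_ideal M" "L \<subseteq> M"
    using exists_maximal_left_ideal left_ideal_add_mult[OF left_ideal_singleton_0] unfolding L_def by blast
  have "0 + 1 * (1 - x) \<in> L"
    unfolding L_def by blast
  then have "1 - x \<in> M"
    using M(2) by auto
  then have "(1 - x) + x \<in> M"
    using left_ideal_add[OF maximal_left_ideal_left_ideal[OF M(1)]] jacobsonD[OF x M(1)] by blast
  then show False
    using maximal_left_ideal_one_notin[OF M(1)] by simp
qed

lemma left_inverse_one_minus_swap:
  fixes x y u :: "'a::ring_1"
  assumes "u * (1 - y * x) = 1"
  shows "(1 + x * u * y) * (1 - x * y) = 1"
proof -
  have "(1 + x * u * y) * (1 - x * y) = 1 - x * y + x * (u * (1 - y * x)) * y"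
    by (simp add: algebra_simps)
  then show ?thesis using assms by simp
qed

lemma jacobson_mult_right:
  fixes x :: "'a::ring_1"
  assumes x: "x \<in> jacobson"
  shows "x * s \<in> jacobson"
proof (rule jacobsonI, rule ccontr)
  fix M :: "'a set"
  assume M: "maximal_left_ideal M" and "x * s \<notin> M"
  then obtain m r where m: "m \<in> M" "1 = m + r * (x * s)"
    using maximal_left_ideal_add_mult_eq_one by blast
  obtain u where "u * (1 - s * (r * x)) = 1"
    using jacobson_one_minus_left_invertible left_ideal_mult[OF left_ideal_jacobson x, of "s * r"]
    by (auto simp: mult.assoc)
  moreover have "m = 1 - r * x * s"
    using m(2) by (simp add: mult.assoc eq_diff_eq)
  ultimately have "(1 + r * x * u * s) * m = 1"
    using left_inverse_one_minus_swap[of u s "r * x"] by (simp add: mult.assoc)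
  moreover have "(1 + r * x * u * s) * m \<in> M"
    using left_ideal_mult[OF maximal_left_ideal_left_ideal[OF M] m(1)] .
  ultimately show False
    using maximal_left_ideal_one_notin[OF M] by simp
qed

lemma jacobson_power_add_diff:
  fixes x y :: "'a::ring_1"
  assumes x: "x \<in> jacobson"
  shows "(x + y) ^ n - y ^ n \<in> jacobson"
proof (induction n)
  case 0
  then show ?case using left_ideal_mult[OF left_ideal_jacobson x, of 0] by simp
next
  case (Suc n)
  have "(x + y) ^ Suc n - y ^ Suc n = (x + y) * ((x + y) ^ n - y ^ n) + x * y ^ n"
    by (simp add: algebra_simps)
  with left_ideal_add[OF left_ideal_jacobson
      left_ideal_mult[OF left_ideal_jacobson Suc.IH] jacobson_mult_right[OF x]]
  show ?case by simp
qed

lemma nilpotent_add_jacobson_imp_power_jacobson: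
  fixes x y :: "'a::ring_1"
  assumes x: "x \<in> jacobson" and "x + y \<in> nilpotents"
  shows "\<exists>n. y ^ Suc n \<in> jacobson"
proof -
  obtain n where "(x + y) ^ n = 0"
    using assms(2) unfolding nilpotents_def by blast
  then have "(x + y) ^ Suc n = 0"
    by simp
  with jacobson_power_add_diff[OF x, of y "Suc n"] have "- (y ^ Suc n) \<in> jacobson"
    by simp
  then show ?thesis
    using left_ideal_uminus[OF left_ideal_jacobson, of "- (y ^ Suc n)"] by auto
qed

lemma idempotent_in_jacobson_eq_0:
  fixes e :: "'a::ring_1"
  assumes e: "e * e = e" and "e \<in> jacobson"
  shows "e = 0"
proof -
  obtain u where u: "u * (1 - e) = 1"
    using jacobson_one_minus_left_invertible assms(2) by blast
  have "e = u * (1 - e) * e" using u by simp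
  also have "\<dots> = 0" using e by (simp add: algebra_simps)
  finally show ?thesis .
qed

lemma unit_in_jacobson_imp_trivial:
  fixes a :: "'a::ring_1"
  assumes "a \<in> units_of_ring" "a \<in> jacobson"
  shows "(1::'a) = 0"
proof -
  obtain b where "b * a = 1"
    using assms(1) unfolding units_of_ring_def by auto
  with left_ideal_mult[OF left_ideal_jacobson assms(2), of b] show ?thesis
    using idempotent_in_jacobson_eq_0[of 1] by simp
qed

lemma idempotent_power: "(e::'a::ring_1) * e = e \<Longrightarrow> e ^ Suc n = e"
  by (induction n) (auto simp: mult.assoc[symmetric])

lemma power_signed_idempotent:
  fixes e :: "'a::ring_1"
  assumes "e * e = e" "s = e \<or> s = - e"
  shows "s ^ Suc n = e \<or> s ^ Suc n = - e"
  using assms idempotent_power[OF assms(1), of n]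
  by (auto simp: power_minus[of e] minus_one_power_iff)

theorem lemma2p4:
  assumes "GWNC TYPE('a::ring_1)"
  shows "nil_set (jacobson :: 'a set)"
  unfolding nil_set_def
proof
  fix a :: 'a
  assume a: "a \<in> jacobson"
  show "a \<in> nilpotents"
  proof (cases "a \<in> units_of_ring")
    case True
    then have "a = a * 1" "(1::'a) = 0"
      using a unit_in_jacobson_imp_trivial by simp_all
    then have "a ^ 1 = 0"
      by (metis mult_zero_right power_one_right)
    then show ?thesis unfolding nilpotents_def by blast
  next
    case False
    then obtain q e where q: "q \<in> nilpotents" and e: "e * e = e"
      and a_eq: "a = q + e \<or> a = q - e"
      using assms unfolding GWNC_def idempotents_def by blast
    then obtain s where s: "s = e \<or> s = - e" and "a + s = q"
      by (metis add_diff_cancel diff_add_cancel diff_conv_add_uminus)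
    then obtain n where "s ^ Suc n \<in> jacobson"
      using nilpotent_add_jacobson_imp_power_jacobson[OF a] q by metis
    then have "e \<in> jacobson"
      using power_signed_idempotent[OF e s, of n] left_ideal_uminus[OF left_ideal_jacobson] by force
    then show ?thesis
      using idempotent_in_jacobson_eq_0[OF e] a_eq q by auto
  qed
qed

end
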